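(* For $n\in\mathbb N$ let $\mu_n=\{p/n:p\in\mathbb Z,\ |p/n|\le n\}$, and let $\Lambda_{\mathbb Q}=\{\mu_{m!}:m\in\mathbb N\}$. Let $I$ be a fine ideal of $\mathfrak F(\mathcal P_{fin}(\mathbb Q),\mathbb R)$ containing $I_{0,\Lambda_{\mathbb Q}}$ and let $P$ be the probability of the NAP-space produced by $(\mathbb Q,1,I)$. Then for all rationals $a<b$, $$P([a,b)_{\mathbb Q})=(b-a)\,P([0,1)_{\mathbb Q}),$$ equivalently $\mathfrak n([a,b)_{\mathbb Q})=(b-a)\,\mathfrak n([0,1)_{\mathbb Q})$; consequently, for rationals with $[a_0,b_0)_{\mathbb Q}\subseteq[a_1,b_1)_{\mathbb Q}$, $a_0<b_0$, $a_1<b_1$, one has $P([a_0,b_0)_{\mathbb Q}\mid[a_1,b_1)_{\mathbb Q})=\dfrac{b_0-a_0}{b_1-a_1}$.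
   Context: $[a,b)_{\mathbb Q}=\{x\in\mathbb Q:a\le x<b\}$. $\mathcal P_{fin}(\Omega)$ is the set of finite subsets of $\Omega$ and $\mathfrak F=\mathfrak F(\mathcal P_{fin}(\Omega),\mathbb R)$ the real algebra of functions $\mathcal P_{fin}(\Omega)\to\mathbb R$ with pointwise operations. For $\omega\in\Omega$, $\chi_\lambda(\omega)=1$ if $\omega\in\lambda$, else $0$. An ideal $I$ of $\mathfrak F$ is fine if it is maximal and $\lambda\mapsto 1-\chi_\lambda(\omega)$ lies in $I$ for every $\omega\in\Omega$. For $\Lambda\subseteq\mathcal P_{fin}(\Omega)$, $I_{0,\Lambda}=\{\varphi\in\mathfrak F:\varphi(\lambda)=0\text{ for all }\lambda\in\Lambda\}$. The NAP-space produced by $(\Omega,w,I)$ ($w:\Omega\to\mathbb R^+$, $I$ fine) has range field $\mathfrak F/I$, $J$ the canonical projection $\varphi\mapsto\varphi+I$, and $P(A)=J\big(\lambda\mapsto\sum_{\omega\in A\cap\lambda}w(\omega)\big)/J\big(\lambda\mapsto\sum_{\omega\in\lambda}w(\omega)\big)$; conditional probability is $P(A\mid B)=P(A\cap B)/P(B)$. For constant weight $w\equiv1$ (a fair space), the numerosity of $A$ is $\mathfrak n(A)=P(A)/P(\{\omega\})$ for any $\omega\in\Omega$, equivalently $\mathfrak n(A)=J(\lambda\mapsto|A\cap\lambda|)$. *)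

theory Defs
  imports Complex_Main "HOL-Algebra.QuotRing" "HOL-Library.FSet"
begin

text \<open>The real algebra F(P_fin(Omega), R) of all real functions on finite subsets
  of Omega, with pointwise operations.  Finite subsets are modelled by the type 'a fset.\<close>
definition F_ring :: "('a fset \<Rightarrow> real) ring" where
  "F_ring = \<lparr>carrier = UNIV, mult = (\<lambda>f g x. f x * g x), one = (\<lambda>_. 1),
             zero = (\<lambda>_. 0), add = (\<lambda>f g x. f x + g x)\<rparr>"

definition chi :: "'a fset \<Rightarrow> 'a \<Rightarrow> real" where
  "chi L w = (if w |\<in>| L then 1 else 0)"

definition fine_ideal :: "('a fset \<Rightarrow> real) set \<Rightarrow> bool" where
  "fine_ideal I \<longleftrightarrow> maximalideal I F_ring \<and> (\<forall>w. (\<lambda>L. 1 - chi L w) \<in> I)"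

definition I0 :: "'a fset set \<Rightarrow> ('a fset \<Rightarrow> real) set" where
  "I0 \<Lambda> = {\<phi>. \<forall>L\<in>\<Lambda>. \<phi> L = 0}"

definition Jproj :: "('a fset \<Rightarrow> real) set \<Rightarrow> ('a fset \<Rightarrow> real) \<Rightarrow> ('a fset \<Rightarrow> real) set" where
  "Jproj I \<phi> = I +>\<^bsub>F_ring\<^esub> \<phi>"

definition NAP_prob :: "('a \<Rightarrow> real) \<Rightarrow> ('a fset \<Rightarrow> real) set \<Rightarrow> 'a set \<Rightarrow> ('a fset \<Rightarrow> real) set" where
  "NAP_prob w I A =
     Jproj I (\<lambda>L. \<Sum>x\<in>A \<inter> fset L. w x)
       \<otimes>\<^bsub>F_ring Quot I\<^esub> inv\<^bsub>F_ring Quot I\<^esub> Jproj I (\<lambda>L. \<Sum>x\<in>fset L. w x)"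

definition NAP_cond_prob :: "('a \<Rightarrow> real) \<Rightarrow> ('a fset \<Rightarrow> real) set \<Rightarrow> 'a set \<Rightarrow> 'a set \<Rightarrow> ('a fset \<Rightarrow> real) set" where
  "NAP_cond_prob w I A B =
     NAP_prob w I (A \<inter> B) \<otimes>\<^bsub>F_ring Quot I\<^esub> inv\<^bsub>F_ring Quot I\<^esub> NAP_prob w I B"

definition numerosity :: "('a fset \<Rightarrow> real) set \<Rightarrow> 'a set \<Rightarrow> ('a fset \<Rightarrow> real) set" where
  "numerosity I A = Jproj I (\<lambda>L. real (card (A \<inter> fset L)))"

definition rconst :: "('a fset \<Rightarrow> real) set \<Rightarrow> real \<Rightarrow> ('a fset \<Rightarrow> real) set" where
  "rconst I r = Jproj I (\<lambda>_. r)"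

definition mu_set :: "nat \<Rightarrow> rat set" where
  "mu_set n = {(of_int p / of_nat n :: rat) | p :: int. \<bar>(of_int p / of_nat n :: rat)\<bar> \<le> of_nat n}"

definition Lambda_Q :: "rat fset set" where
  "Lambda_Q = {L. \<exists>m. fset L = mu_set (fact m)}"

definition ratIco :: "rat \<Rightarrow> rat \<Rightarrow> rat set" where
  "ratIco a b = {x. a \<le> x \<and> x < b}"

end

theory Submission
  imports Defs
begin

(* Write J for the projection onto the field F/I and c_A(L) = |A \<inter> L|.
   Because I is fine and contains I0(Lambda_Q), every function that vanishes on mu_{m!}
   for all sufficiently large m lies in I: multiplying by chi at a point w larger than
   (M!) kills the finitely many small grids, and the factor 1 - chi(w) lies in I.  Hence
   J only sees the behaviour of a function "eventually along Lambda_Q".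
   Along Lambda_Q the count is exact: once m! is divisible by the denominators of a and b
   and m! \<ge> |a|, |b|, the grid mu_{m!} meets [a,b) in exactly (b - a) m! points.
   So c_[a,b) = (b - a) c_[0,1) eventually, which gives the numerosity statement at once;
   for the probability we identify P(A) with J(c_A / |L|) and for the conditional
   probability P(A | B) with J(c_(A \<inter> B) / c_B), which reduces the remaining statements
   to the same eventual identity.
   The file first collects ring-theoretic facts about F and J, then the ideal-theoretic
   criterion "eventually zero along Lambda_Q implies membership in I", then the counting
   argument, then the descriptions of P and P( | ), and finally the theorem. *)

lemma F_ring_simps [simp]:
  "carrier F_ring = UNIV" "mult F_ring f g = (\<lambda>x. f x * g x)" "one F_ring = (\<lambda>_. 1)"
  "zero F_ring = (\<lambda>_. 0)" "add F_ring f g = (\<lambda>x. f x + g x)"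
  by (auto simp: F_ring_def)

lemma F_ring_cring: "cring F_ring"
proof (rule cringI)
  show "abelian_group F_ring"
    by (rule abelian_groupI) (auto intro!: exI[of _ "\<lambda>x. - _ x"])
  show "comm_monoid F_ring"
    by (rule comm_monoidI) auto
qed (auto simp: algebra_simps)

lemma F_ring_minus [simp]: "a_minus F_ring f g = (\<lambda>x. f x - g x)"
proof -
  interpret cring F_ring by (rule F_ring_cring)
  have "\<ominus>\<^bsub>F_ring\<^esub> g = (\<lambda>x. - g x)"
    by (rule minus_equality) auto
  then show ?thesis by (simp add: minus_eq)
qed

context
  fixes I :: "('a fset \<Rightarrow> real) set"
  assumes ideal: "ideal I F_ring"
begin

interpretation F: cring F_ring by (rule F_ring_cring)
interpretation I: ideal I F_ring by (rule ideal)

lemma Jproj_carrier: "Jproj I f \<in> carrier (F_ring Quot I)"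
  unfolding Jproj_def using ring_hom_closed[OF I.rcos_ring_hom] by simp

lemma Jproj_mult: "Jproj I f \<otimes>\<^bsub>F_ring Quot I\<^esub> Jproj I g = Jproj I (\<lambda>x. f x * g x)"
  unfolding Jproj_def using I.rcoset_mult_add by (simp add: FactRing_def)

lemma Jproj_one: "\<one>\<^bsub>F_ring Quot I\<^esub> = Jproj I (\<lambda>_. 1)"
  by (simp add: FactRing_def Jproj_def)

lemma Jproj_eq_iff: "Jproj I f = Jproj I g \<longleftrightarrow> (\<lambda>x. f x - g x) \<in> I"
proof -
  have "Jproj I f = Jproj I g \<longleftrightarrow> f \<in> I +>\<^bsub>F_ring\<^esub> g"
    unfolding Jproj_def using I.a_repr_independenceD I.a_repr_independence' by auto
  also have "\<dots> \<longleftrightarrow> (\<lambda>x. f x - g x) \<in> I"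
    using I.a_rcos_module_minus[OF F.ring_axioms, of g f] by simp
  finally show ?thesis .
qed

end

lemma Jproj_inverse:
  assumes "maximalideal I F_ring"
    and inverse: "Jproj I (\<lambda>x. f x * g x) = Jproj I (\<lambda>_. 1)"
  shows "inv\<^bsub>F_ring Quot I\<^esub> (Jproj I f) = Jproj I g"
proof -
  interpret M: maximalideal I F_ring by fact
  interpret Q: field "F_ring Quot I" by (rule M.quotient_is_field[OF F_ring_cring])
  have ideal: "ideal I F_ring" by (rule M.ideal_axioms)
  have "Jproj I f \<otimes>\<^bsub>F_ring Quot I\<^esub> Jproj I g = \<one>\<^bsub>F_ring Quot I\<^esub>"
    using inverse by (simp add: Jproj_mult[OF ideal] Jproj_one[OF ideal])
  moreover have "Jproj I g \<otimes>\<^bsub>F_ring Quot I\<^esub> Jproj I f = \<one>\<^bsub>F_ring Quot I\<^esub>"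
    using inverse by (simp add: Jproj_mult[OF ideal] Jproj_one[OF ideal] mult.commute)
  ultimately show ?thesis
    by (intro Q.inv_char Jproj_carrier[OF ideal])
qed

text \<open>A fine ideal containing I0(Lambda) contains every function that vanishes on all
  members of Lambda through one fixed point w: such a function equals
  phi * (1 - chi(w)) + phi * chi(w), a sum of an element of I and an element of I0(Lambda).\<close>
lemma fine_ideal_vanishing_through_point:
  assumes fine: "fine_ideal I" and contains: "I0 \<Lambda> \<subseteq> I"
    and vanish: "\<forall>L\<in>\<Lambda>. w |\<in>| L \<longrightarrow> \<phi> L = 0"
  shows "\<phi> \<in> I"
proof -
  interpret F: cring F_ring by (rule F_ring_cring)
  interpret M: maximalideal I F_ring using fine by (simp add: fine_ideal_def)
  have "(\<lambda>L. 1 - chi L w) \<in> I" using fine by (simp add: fine_ideal_def)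
  then have off_w: "(\<lambda>L. \<phi> L * (1 - chi L w)) \<in> I"
    using M.I_l_closed[of "\<lambda>L. 1 - chi L w" \<phi>] by simp
  have "(\<lambda>L. \<phi> L * chi L w) \<in> I0 \<Lambda>"
    using vanish by (auto simp: I0_def chi_def)
  then have at_w: "(\<lambda>L. \<phi> L * chi L w) \<in> I" using contains by blast
  have "(\<lambda>L. \<phi> L * (1 - chi L w)) \<oplus>\<^bsub>F_ring\<^esub> (\<lambda>L. \<phi> L * chi L w) \<in> I"
    by (rule M.a_closed[OF off_w at_w])
  then show ?thesis by (simp add: algebra_simps)
qed

text \<open>"P holds on mu_{m!} for all large m": the mode of convergence seen by J.\<close>
definition eventually_Lambda_Q :: "(rat fset \<Rightarrow> bool) \<Rightarrow> bool" where
  "eventually_Lambda_Q P \<longleftrightarrow> (\<forall>\<^sub>F m in sequentially. \<forall>L. fset L = mu_set (fact m) \<longrightarrow> P L)"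

lemma eventually_Lambda_Q_mono:
  "eventually_Lambda_Q P \<Longrightarrow> (\<And>L. P L \<Longrightarrow> Q L) \<Longrightarrow> eventually_Lambda_Q Q"
  unfolding eventually_Lambda_Q_def by (auto elim: eventually_mono)

lemma eventually_Lambda_Q_conj:
  "eventually_Lambda_Q P \<Longrightarrow> eventually_Lambda_Q Q \<Longrightarrow> eventually_Lambda_Q (\<lambda>L. P L \<and> Q L)"
  unfolding eventually_Lambda_Q_def by (auto elim: eventually_elim2)

lemma mu_set_bound: "x \<in> mu_set N \<Longrightarrow> \<bar>x\<bar> \<le> of_nat N"
  by (auto simp: mu_set_def)

lemma zero_in_mu_set: "(0::rat) \<in> mu_set N"
  unfolding mu_set_def by (rule CollectI, rule exI[of _ 0]) simp

text \<open>The key criterion: functions that are eventually zero along Lambda_Q lie in I.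
  The point w = M! + 1 lies in no grid mu_{m!} with m < M.\<close>
lemma eventually_zero_in_ideal:
  assumes fine: "fine_ideal I" and contains: "I0 Lambda_Q \<subseteq> I"
    and zero: "eventually_Lambda_Q (\<lambda>L. \<phi> L = 0)"
  shows "\<phi> \<in> I"
proof -
  obtain M where large: "\<And>m L. M \<le> m \<Longrightarrow> fset L = mu_set (fact m) \<Longrightarrow> \<phi> L = 0"
    using zero by (auto simp: eventually_Lambda_Q_def eventually_sequentially)
  define w :: rat where "w = of_nat (fact M) + 1"
  have w_outside: "w \<notin> mu_set (fact m)" if "m < M" for m
  proof
    assume "w \<in> mu_set (fact m)"
    then have "w \<le> of_nat (fact m)" using mu_set_bound by fastforce
    moreover have "(fact m :: nat) \<le> fact M" using that by (intro fact_mono) simp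
    ultimately show False unfolding w_def by linarith
  qed
  have "\<forall>L\<in>Lambda_Q. w |\<in>| L \<longrightarrow> \<phi> L = 0"
  proof (intro ballI impI)
    fix L assume "L \<in> Lambda_Q" "w |\<in>| L"
    then obtain m where "fset L = mu_set (fact m)" "w \<in> mu_set (fact m)"
      by (auto simp: Lambda_Q_def)
    then show "\<phi> L = 0" using large w_outside by (meson not_le)
  qed
  then show ?thesis by (rule fine_ideal_vanishing_through_point[OF fine contains])
qed

lemma Jproj_eq_eventually:
  assumes fine: "fine_ideal I" and contains: "I0 Lambda_Q \<subseteq> I"
    and eq: "eventually_Lambda_Q (\<lambda>L. f L = g L)"
  shows "Jproj I f = Jproj I g"
proof -
  have "ideal I F_ring" using fine by (simp add: fine_ideal_def maximalideal_def)
  moreover have "(\<lambda>L. f L - g L) \<in> I"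
    using eventually_zero_in_ideal[OF fine contains] eventually_Lambda_Q_mono[OF eq] by simp
  ultimately show ?thesis by (simp add: Jproj_eq_iff)
qed

lemma Jproj_inverse_eventually:
  assumes fine: "fine_ideal I" and contains: "I0 Lambda_Q \<subseteq> I"
    and inverse: "eventually_Lambda_Q (\<lambda>L. f L * g L = 1)"
  shows "inv\<^bsub>F_ring Quot I\<^esub> (Jproj I f) = Jproj I g"
  using fine by (auto simp: fine_ideal_def intro!: Jproj_inverse
      Jproj_eq_eventually[OF fine contains inverse])

lemma rat_eventually_on_fact_grid:
  fixes a :: rat
  shows "\<forall>\<^sub>F m in sequentially. \<exists>A. a = of_int A / of_nat (fact m) \<and> \<bar>a\<bar> \<le> of_nat (fact m)"
proof -
  obtain p q where pq: "quotient_of a = (p, q)" by (cases "quotient_of a")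
  have q: "q > 0" and a: "a = of_int p / of_int q"
    using quotient_of_denom_pos[OF pq] quotient_of_div[OF pq] by auto
  have on_grid: "\<exists>A. a = of_int A / of_nat (fact m) \<and> \<bar>a\<bar> \<le> of_nat (fact m)"
    if m: "nat q + nat \<lceil>\<bar>a\<bar>\<rceil> \<le> m" for m
  proof -
    have "nat q dvd fact m" using m q by (intro dvd_fact) auto
    then obtain k where k: "fact m = nat q * k" by (rule dvdE)
    then have "k > 0" using fact_gt_zero[of m] by (cases k) auto
    then have "a = of_int (p * int k) / of_nat (fact m)"
      using k q a by (simp add: field_simps)
    moreover have "\<bar>a\<bar> \<le> of_nat (fact m)"
    proof -
      have "\<bar>a\<bar> \<le> of_nat m" using m by linarith
      also have "\<dots> \<le> of_nat (fact m)" by (simp only: of_nat_le_iff fact_ge_self)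
      finally show ?thesis .
    qed
    ultimately show ?thesis by blast
  qed
  show ?thesis by (rule eventually_mono[OF eventually_ge_at_top on_grid])
qed

lemma Ico_inter_mu_set:
  fixes a b :: rat
  assumes N: "N > 0" and a: "a = of_int A / of_nat N" and b: "b = of_int B / of_nat N"
    and bounds: "\<bar>a\<bar> \<le> of_nat N" "\<bar>b\<bar> \<le> of_nat N"
  shows "ratIco a b \<inter> mu_set N = (\<lambda>p. of_int p / of_nat N) ` {A..<B}"
proof -
  have ord: "(of_int p / of_nat N \<le> (of_int q / of_nat N :: rat)) \<longleftrightarrow> p \<le> q"
    "(of_int p / of_nat N < (of_int q / of_nat N :: rat)) \<longleftrightarrow> p < q" for p q
    using N by (simp_all add: divide_le_cancel divide_less_cancel)
  show ?thesis
  proof (intro equalityI subsetI)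
    fix x assume "x \<in> ratIco a b \<inter> mu_set N"
    then obtain p where "x = of_int p / of_nat N" "a \<le> x" "x < b"
      by (auto simp: ratIco_def mu_set_def)
    then show "x \<in> (\<lambda>p. of_int p / of_nat N) ` {A..<B}" using a b ord by auto
  next
    fix x :: rat assume "x \<in> (\<lambda>p. of_int p / of_nat N) ` {A..<B}"
    then obtain p where "A \<le> p" "p < B" and x: "x = of_int p / of_nat N" by auto
    then have "a \<le> x" "x < b" using a b ord by auto
    moreover have "\<bar>x\<bar> \<le> of_nat N" using bounds \<open>a \<le> x\<close> \<open>x < b\<close> by auto
    ultimately show "x \<in> ratIco a b \<inter> mu_set N" using x
      by (auto simp: ratIco_def mu_set_def)
  qed
qed

lemma card_Ico_inter_mu_fact:
  fixes a b :: rat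
  assumes ab: "a < b"
  shows "\<forall>\<^sub>F m in sequentially.
           real (card (ratIco a b \<inter> mu_set (fact m))) = of_rat (b - a) * real (fact m :: nat)"
  using rat_eventually_on_fact_grid[of a] rat_eventually_on_fact_grid[of b]
proof eventually_elim
  case (elim m)
  define N :: nat where "N = fact m"
  from elim obtain A B where a: "a = of_int A / of_nat N" and b: "b = of_int B / of_nat N"
    and bounds: "\<bar>a\<bar> \<le> of_nat N" "\<bar>b\<bar> \<le> of_nat N"
    unfolding N_def by blast
  have N: "N > 0" by (simp add: N_def)
  have "A < B" using ab a b N by (simp add: divide_less_cancel)
  have "inj_on (\<lambda>p. of_int p / of_nat N :: rat) {A..<B}"
    using N by (auto simp: inj_on_def)
  then have "real (card (ratIco a b \<inter> mu_set N)) = real_of_int (B - A)"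
    using Ico_inter_mu_set[OF N a b bounds] \<open>A < B\<close> by (simp add: card_image)
  also have "\<dots> = of_rat (b - a) * real N"
    using a b N by (simp add: of_rat_divide of_rat_diff diff_divide_distrib[symmetric])
  finally show ?case by (simp add: N_def)
qed

lemma count_Ico_proportional:
  fixes a b :: rat
  assumes ab: "a < b"
  shows "eventually_Lambda_Q (\<lambda>L.
           real (card (ratIco a b \<inter> fset L))
             = of_rat (b - a) * real (card (ratIco 0 1 \<inter> fset L))
           \<and> real (card (ratIco 0 1 \<inter> fset L)) > 0)"
proof -
  have unit: "\<forall>\<^sub>F m in sequentially. real (card (ratIco 0 1 \<inter> mu_set (fact m))) = real (fact m :: nat)"
    using card_Ico_inter_mu_fact[of 0 1] by simp
  show ?thesis
    unfolding eventually_Lambda_Q_def using card_Ico_inter_mu_fact[OF ab] unit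
    by eventually_elim auto
qed

lemma NAP_prob_fair:
  assumes fine: "fine_ideal I" and contains: "I0 Lambda_Q \<subseteq> I"
  shows "NAP_prob (\<lambda>_. 1) I A = Jproj I (\<lambda>L. real (card (A \<inter> fset L)) / real (card (fset L)))"
proof -
  have ideal: "ideal I F_ring" using fine by (simp add: fine_ideal_def maximalideal_def)
  have "eventually_Lambda_Q (\<lambda>L. real (card (fset L)) * (1 / real (card (fset L))) = 1)"
    unfolding eventually_Lambda_Q_def
  proof (intro always_eventually allI impI)
    fix m L assume "fset L = mu_set (fact m)"
    then have "card (fset L) \<noteq> 0" using zero_in_mu_set by (metis card_0_eq empty_iff finite_fset)
    then show "real (card (fset L)) * (1 / real (card (fset L))) = 1" by simp
  qed
  then have "inv\<^bsub>F_ring Quot I\<^esub> Jproj I (\<lambda>L. real (card (fset L)))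
               = Jproj I (\<lambda>L. 1 / real (card (fset L)))"
    by (rule Jproj_inverse_eventually[OF fine contains])
  then show ?thesis by (simp add: NAP_prob_def Jproj_mult[OF ideal])
qed

lemma NAP_cond_prob_fair:
  assumes fine: "fine_ideal I" and contains: "I0 Lambda_Q \<subseteq> I"
    and meets: "eventually_Lambda_Q (\<lambda>L. card (B \<inter> fset L) > 0)"
  shows "NAP_cond_prob (\<lambda>_. 1) I A B
           = Jproj I (\<lambda>L. real (card (A \<inter> B \<inter> fset L)) / real (card (B \<inter> fset L)))"
proof -
  have ideal: "ideal I F_ring" using fine by (simp add: fine_ideal_def maximalideal_def)
  have size: "card (fset L) \<ge> card (B \<inter> fset L)" for L
    by (intro card_mono) auto
  have "eventually_Lambda_Q (\<lambda>L. real (card (B \<inter> fset L)) / real (card (fset L))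
          * (real (card (fset L)) / real (card (B \<inter> fset L))) = 1)"
    using meets by (rule eventually_Lambda_Q_mono) (use size in \<open>auto\<close>)
  then have inverse:
    "inv\<^bsub>F_ring Quot I\<^esub> Jproj I (\<lambda>L. real (card (B \<inter> fset L)) / real (card (fset L)))
      = Jproj I (\<lambda>L. real (card (fset L)) / real (card (B \<inter> fset L)))"
    by (rule Jproj_inverse_eventually[OF fine contains])
  have "eventually_Lambda_Q (\<lambda>L.
          real (card (A \<inter> B \<inter> fset L)) / real (card (fset L))
            * (real (card (fset L)) / real (card (B \<inter> fset L)))
          = real (card (A \<inter> B \<inter> fset L)) / real (card (B \<inter> fset L)))"
    using meets by (rule eventually_Lambda_Q_mono) (use size in \<open>auto\<close>)
  then show ?thesis
    unfolding NAP_cond_prob_def NAP_prob_fair[OF fine contains] inverse Jproj_mult[OF ideal]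
    by (rule Jproj_eq_eventually[OF fine contains])
qed

lemma NAP_cond_prob_Ico:
  fixes a0 b0 a1 b1 :: rat
  assumes fine: "fine_ideal I" and contains: "I0 Lambda_Q \<subseteq> I"
    and ab0: "a0 < b0" and ab1: "a1 < b1" and sub: "ratIco a0 b0 \<subseteq> ratIco a1 b1"
  shows "NAP_cond_prob (\<lambda>_. 1) I (ratIco a0 b0) (ratIco a1 b1)
           = rconst I (of_rat (b0 - a0) / of_rat (b1 - a1))"
proof -
  have counts: "eventually_Lambda_Q (\<lambda>L.
          (real (card (ratIco a0 b0 \<inter> fset L)) = of_rat (b0 - a0) * real (card (ratIco 0 1 \<inter> fset L))
           \<and> real (card (ratIco 0 1 \<inter> fset L)) > 0)
        \<and> (real (card (ratIco a1 b1 \<inter> fset L)) = of_rat (b1 - a1) * real (card (ratIco 0 1 \<inter> fset L))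
           \<and> real (card (ratIco 0 1 \<inter> fset L)) > 0))"
    by (intro eventually_Lambda_Q_conj count_Ico_proportional ab0 ab1)
  have positive: "of_rat (b1 - a1) > (0::real)" using ab1 by simp
  have meets: "eventually_Lambda_Q (\<lambda>L. card (ratIco a1 b1 \<inter> fset L) > 0)"
    using counts by (rule eventually_Lambda_Q_mono) (metis positive mult_pos_pos of_nat_0_less_iff)
  have inside: "ratIco a0 b0 \<inter> ratIco a1 b1 = ratIco a0 b0" using sub by blast
  have "NAP_cond_prob (\<lambda>_. 1) I (ratIco a0 b0) (ratIco a1 b1)
      = Jproj I (\<lambda>L. real (card (ratIco a0 b0 \<inter> fset L)) / real (card (ratIco a1 b1 \<inter> fset L)))"
    using NAP_cond_prob_fair[OF fine contains meets] by (simp only: inside)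
  also have "\<dots> = rconst I (of_rat (b0 - a0) / of_rat (b1 - a1))"
    unfolding rconst_def
    by (rule Jproj_eq_eventually[OF fine contains], rule eventually_Lambda_Q_mono[OF counts])
      (simp add: card_gt_0_iff)
  finally show ?thesis .
qed

theorem mainTheorem15:
  fixes I :: "(rat fset \<Rightarrow> real) set"
  assumes fine: "fine_ideal I"
    and contains: "I0 Lambda_Q \<subseteq> I"
  shows "(\<forall>a b. a < b \<longrightarrow>
            NAP_prob (\<lambda>_. 1) I (ratIco a b)
              = rconst I (of_rat (b - a)) \<otimes>\<^bsub>F_ring Quot I\<^esub> NAP_prob (\<lambda>_. 1) I (ratIco 0 1))
       \<and> (\<forall>a b. a < b \<longrightarrow>
            numerosity I (ratIco a b)
              = rconst I (of_rat (b - a)) \<otimes>\<^bsub>F_ring Quot I\<^esub> numerosity I (ratIco 0 1))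
       \<and> (\<forall>a0 b0 a1 b1. a0 < b0 \<longrightarrow> a1 < b1 \<longrightarrow> ratIco a0 b0 \<subseteq> ratIco a1 b1 \<longrightarrow>
            NAP_cond_prob (\<lambda>_. 1) I (ratIco a0 b0) (ratIco a1 b1)
              = rconst I (of_rat (b0 - a0) / of_rat (b1 - a1)))"
proof (intro conjI allI impI)
  have ideal: "ideal I F_ring" using fine by (simp add: fine_ideal_def maximalideal_def)
  note J_eq = Jproj_eq_eventually[OF fine contains]
  fix a b :: rat assume ab: "a < b"
  note proportional = eventually_Lambda_Q_mono[OF count_Ico_proportional[OF ab]]
  show "NAP_prob (\<lambda>_. 1) I (ratIco a b)
          = rconst I (of_rat (b - a)) \<otimes>\<^bsub>F_ring Quot I\<^esub> NAP_prob (\<lambda>_. 1) I (ratIco 0 1)"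
    unfolding NAP_prob_fair[OF fine contains] rconst_def Jproj_mult[OF ideal]
    by (rule J_eq, rule proportional) simp
  show "numerosity I (ratIco a b)
          = rconst I (of_rat (b - a)) \<otimes>\<^bsub>F_ring Quot I\<^esub> numerosity I (ratIco 0 1)"
    unfolding numerosity_def rconst_def Jproj_mult[OF ideal]
    by (rule J_eq, rule proportional) simp
next
  fix a0 b0 a1 b1 :: rat
  assume "a0 < b0" "a1 < b1" "ratIco a0 b0 \<subseteq> ratIco a1 b1"
  then show "NAP_cond_prob (\<lambda>_. 1) I (ratIco a0 b0) (ratIco a1 b1)
      = rconst I (of_rat (b0 - a0) / of_rat (b1 - a1))"
    by (rule NAP_cond_prob_Ico[OF fine contains])
qed

end
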